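(* The $(3,3)$ Padé approximant of the exponential, \[ \psi_{36}(z)=\frac{1+\frac z2+\frac{z^2}{10}+\frac{z^3}{120}}{1-\frac z2+\frac{z^2}{10}-\frac{z^3}{120}}, \] which is the unique element of $\Pi_{3/3,6}$ (normalized so that numerator and denominator take the value $1$ at $0$), satisfies \[ R(\psi_{36})=-2+\sqrt[3]{4}\left(\sqrt[3]{3-\sqrt5}+\sqrt[3]{3+\sqrt5}\right)\approx 2.207606, \] i.e. the unique real root of $x^3+6x^2-40=0$. Hence $R_{3/3,6}$ equals this number.
   Context: A real rational function $\psi$ is always considered in lowest terms, as a smooth function on $\mathbb{R}$ minus its finitely many poles. It is absolutely monotonic at $x\in\mathbb{R}$ if $x$ is not a pole and $\psi^{(k)}(x)\ge 0$ for all integers $k\ge 0$. The radius of absolute monotonicity is $R(\psi)=\sup\big(\{r\in[0,\infty): \psi \text{ is absolutely monotonic at each point of } [-r,0]\}\cup\{0\}\big)\in[0,+\infty]$. For $m,n,p\in\mathbb{N}$, $\Pi_{m/n,p}$ denotes the set of rational functions $\psi=P/Q$ with $P,Q$ real polynomials, $\deg P\le m$, $Q\not\equiv 0$, $\deg Q\le n$, such that $\psi(z)-e^z=O(z^{p+1})$ as $z\to 0$. Finally, $R_{m/n,p}=\sup\{R(\psi):\psi\in\Pi_{m/n,p}\}$. *)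

theory Defs
  imports "HOL-Analysis.Analysis" "HOL-Computational_Algebra.Computational_Algebra"
    "HOL-Library.Landau_Symbols" "HOL-Computational_Algebra.Field_as_Ring"
begin

text \<open>A real rational function psi = P/Q is represented by a pair of real polynomials
  (P, Q) with Q nonzero.\<close>

definition rnum :: "real poly \<Rightarrow> real poly \<Rightarrow> real poly" where
  "rnum P Q = P div gcd P Q"

definition rden :: "real poly \<Rightarrow> real poly \<Rightarrow> real poly" where
  "rden P Q = Q div gcd P Q"

definition ratfun :: "real poly \<Rightarrow> real poly \<Rightarrow> real \<Rightarrow> real" where
  "ratfun P Q = (\<lambda>t. poly (rnum P Q) t / poly (rden P Q) t)"

definition is_pole :: "real poly \<Rightarrow> real poly \<Rightarrow> real \<Rightarrow> bool" where
  "is_pole P Q x \<longleftrightarrow> poly (rden P Q) x = 0"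

definition abs_monotonic_at :: "real poly \<Rightarrow> real poly \<Rightarrow> real \<Rightarrow> bool" where
  "abs_monotonic_at P Q x \<longleftrightarrow>
     \<not> is_pole P Q x \<and> (\<forall>k::nat. (deriv ^^ k) (ratfun P Q) x \<ge> 0)"

definition radius_am :: "real poly \<Rightarrow> real poly \<Rightarrow> ereal" where
  "radius_am P Q = Sup (ereal ` ({r. r \<ge> 0 \<and> (\<forall>x\<in>{-r..0}. abs_monotonic_at P Q x)} \<union> {0}))"

definition Pi_class :: "nat \<Rightarrow> nat \<Rightarrow> nat \<Rightarrow> (real poly \<times> real poly) set" where
  "Pi_class m n p = {(P, Q). degree P \<le> m \<and> Q \<noteq> 0 \<and> degree Q \<le> n \<and>
       (\<lambda>z. ratfun P Q z - exp z) \<in> O[at 0](\<lambda>z. z ^ (p + 1))}"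

definition R_opt :: "nat \<Rightarrow> nat \<Rightarrow> nat \<Rightarrow> ereal" where
  "R_opt m n p = Sup ((\<lambda>(P, Q). radius_am P Q) ` Pi_class m n p)"

definition psi36_num :: "real poly" where
  "psi36_num = [:1, 1/2, 1/10, 1/120:]"

definition psi36_den :: "real poly" where
  "psi36_den = [:1, -1/2, 1/10, -1/120:]"

end

(*
  The denominator of psi36 factors as (p - x) |q - x|^2 / 120 with a real root p ~ 4.644 and
  complex roots q, cnj q, so partial fractions give, for k \<ge> 1,
    psi36^(k)(x) = k! (A / (p - x)^(k+1) + 2 Re (B / (q - x)^(k+1)))   with 2 |B| \<le> A.
  Left of 0 the distances |q - x| and p - x agree exactly at x = -rho, rho = 4 (5 - p) / (p - 4).
  For -rho \<le> x \<le> 0 the real term dominates, so every derivative is nonnegative; for x < -rho the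
  complex term decays more slowly and its rotating phase forces some derivative to be negative.
  Hence R(psi36) = rho, and eliminating p shows that rho is the real root of x^3 + 6 x^2 - 40.
  Finally, any two elements of Pi_{m/n,k} with m + n \<le> k agree as rational functions, since
  their cross difference is a polynomial of degree \<le> m + n vanishing to order k + 1 at 0.
*)

theory Submission
  imports Defs "HOL-Real_Asymp.Real_Asymp"
begin

lemma partial_fractions_three_poles:
  fixes a b c z r0 r1 r2 :: "'a::field"
  assumes "a \<noteq> b" "a \<noteq> c" "b \<noteq> c" "z \<noteq> a" "z \<noteq> b" "z \<noteq> c"
  shows "(r0 + r1 * z + r2 * z^2) / ((a - z) * (b - z) * (c - z)) =
           (r0 + r1 * a + r2 * a^2) / ((b - a) * (c - a) * (a - z))
         + (r0 + r1 * b + r2 * b^2) / ((a - b) * (c - b) * (b - z))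
         + (r0 + r1 * c + r2 * c^2) / ((a - c) * (b - c) * (c - z))"
proof -
  have nz: "a - b \<noteq> 0" "a - c \<noteq> 0" "b - c \<noteq> 0" "a - z \<noteq> 0" "b - z \<noteq> 0" "c - z \<noteq> 0"
    "b - a \<noteq> 0" "c - a \<noteq> 0" "c - b \<noteq> 0"
    using assms by auto
  show ?thesis
    by (simp only: add_frac_eq frac_eq_eq mult_eq_0_iff nz de_Morgan_disj simp_thms) algebra
qed

lemma has_field_derivative_divide_power:
  fixes q C z :: "'a::real_normed_field"
  assumes "z \<noteq> q"
  shows "((\<lambda>w. C / (q - w) ^ n) has_field_derivative of_nat n * C / (q - z) ^ Suc n) (at z)"
proof -
  have nz: "q - z \<noteq> 0" using assms by simp
  have "((\<lambda>w. C * inverse (q - w) ^ n) has_field_derivative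
          C * (of_nat n * inverse (q - z) ^ (n - 1) * (inverse (q - z) * inverse (q - z)))) (at z)"
    using nz by (auto intro!: derivative_eq_intros)
  moreover have "C * (of_nat n * inverse (q - z) ^ (n - 1) * (inverse (q - z) * inverse (q - z)))
      = of_nat n * C / (q - z) ^ Suc n"
    using nz by (cases n) (simp_all add: field_simps power_inverse)
  moreover have "(\<lambda>w. C * inverse (q - w) ^ n) = (\<lambda>w. C / (q - w) ^ n)"
    by (simp add: divide_inverse power_inverse)
  ultimately show ?thesis
    by metis
qed

lemma has_real_derivative_Re_divide_power:
  fixes q B :: complex
  assumes "q \<notin> \<real>"
  shows "((\<lambda>t. Re (B / (q - of_real t) ^ n)) has_real_derivative
           real n * Re (B / (q - of_real x) ^ Suc n)) (at x)"
proof -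
  have "of_real x \<noteq> q"
    using assms by auto
  have "of_nat n * B / (q - of_real x) ^ Suc n = complex_of_real (real n) * (B / (q - of_real x) ^ Suc n)"
    by simp
  then have "Re (of_nat n * B / (q - of_real x) ^ Suc n) = real n * Re (B / (q - of_real x) ^ Suc n)"
    by (simp only: times_complex.sel Re_complex_of_real Im_complex_of_real mult_zero_left diff_zero)
  then show ?thesis
    using has_field_derivative_Re[OF has_vector_derivative_real_field
        [OF has_field_derivative_divide_power[OF \<open>of_real x \<noteq> q\<close>, of B n]]] by simp
qed

lemma higher_deriv_simple_fractions:
  fixes p c A :: real and q B :: complex
  assumes "q \<notin> \<real>" "x \<noteq> p"
  shows "(deriv ^^ k) (\<lambda>t. c + A / (p - t) + Re (B / (q - of_real t))) x
       = (if k = 0 then c else 0) + fact k * (A / (p - x) ^ Suc k + Re (B / (q - of_real x) ^ Suc k))"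
  using assms(2)
proof (induction k arbitrary: x)
  case (Suc k)
  define g where "g t = (if k = 0 then c else 0)
    + fact k * (A / (p - t) ^ Suc k + Re (B / (q - of_real t) ^ Suc k))" for t
  have "eventually (\<lambda>t. t \<noteq> p) (nhds x)"
    using Suc.prems by (intro t1_space_nhds)
  then have "eventually (\<lambda>t. (deriv ^^ k) (\<lambda>t. c + A / (p - t) + Re (B / (q - of_real t))) t = g t)
      (nhds x)"
    by eventually_elim (simp add: Suc.IH g_def)
  then have "(deriv ^^ Suc k) (\<lambda>t. c + A / (p - t) + Re (B / (q - of_real t))) x = deriv g x"
    by (simp add: deriv_cong_ev)
  also have "\<dots> = fact (Suc k) * (A / (p - x) ^ Suc (Suc k) + Re (B / (q - of_real x) ^ Suc (Suc k)))"
  proof (rule DERIV_imp_deriv)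
    define a b where "a = A / (p - x) ^ Suc (Suc k)" and "b = Re (B / (q - of_real x) ^ Suc (Suc k))"
    have "((\<lambda>t. A / (p - t) ^ Suc k) has_real_derivative real (Suc k) * a) (at x)"
      using has_field_derivative_divide_power[of x p A "Suc k"] Suc.prems unfolding a_def by simp
    moreover have "((\<lambda>t. Re (B / (q - of_real t) ^ Suc k)) has_real_derivative real (Suc k) * b) (at x)"
      unfolding b_def by (rule has_real_derivative_Re_divide_power[OF assms(1)])
    ultimately have "(g has_real_derivative 0 + fact k * (real (Suc k) * a + real (Suc k) * b)) (at x)"
      unfolding g_def by (intro DERIV_add DERIV_const DERIV_cmult)
    then show "(g has_real_derivative fact (Suc k) * (a + b)) (at x)"
      by (simp add: algebra_simps)
  qed
  finally show ?case
    by simp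
qed simp

lemma Re_consecutive_rotations_lower_bound:
  assumes "cmod w = 1"
  shows "cmod z * \<bar>Im w\<bar> \<le> \<bar>Re z\<bar> + \<bar>Re (z * w)\<bar>"
proof -
  have w: "(Re w)^2 + (Im w)^2 = 1"
    using assms cmod_power2[of w] by simp
  have "(cmod z * \<bar>Im w\<bar>)^2 = (Re z)^2 + (Re (z * w))^2 - 2 * Re w * Re z * Re (z * w)"
    unfolding power_mult_distrib cmod_power2 using w by simp algebra
  also have "\<dots> \<le> (\<bar>Re z\<bar> + \<bar>Re (z * w)\<bar>)^2"
  proof -
    define a where "a = Re z"
    define b where "b = Re (z * w)"
    have "\<bar>Re w\<bar> \<le> 1"
      using abs_Re_le_cmod[of w] assms by simp
    then have "\<bar>Re w\<bar> * \<bar>a * b\<bar> \<le> \<bar>a * b\<bar>"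
      by (simp add: mult_left_le_one_le)
    then have "- (Re w * a * b) \<le> \<bar>a\<bar> * \<bar>b\<bar>"
      by (simp add: abs_mult abs_le_iff mult.assoc flip: abs_mult)
    then show ?thesis
      unfolding a_def[symmetric] b_def[symmetric] by (simp add: power2_eq_square algebra_simps)
  qed
  finally show ?thesis
    by (rule power2_le_imp_le) simp
qed

lemma sum_Re_rotations_bounded:
  assumes "cmod w = 1" "w \<noteq> 1"
  shows "(\<Sum>i<m. Re (z * w ^ i)) \<le> 2 * cmod z / cmod (1 - w)"
proof -
  have "(\<Sum>i<m. Re (z * w ^ i)) = Re (z * (\<Sum>i<m. w ^ i))"
    by (simp only: Re_sum sum_distrib_left)
  also have "\<dots> = Re (z * ((1 - w ^ m) / (1 - w)))"
    using assms(2) by (simp add: sum_gp_strict)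
  also have "\<dots> \<le> cmod z * (cmod (1 - w ^ m) / cmod (1 - w))"
    using complex_Re_le_cmod[of "z * ((1 - w ^ m) / (1 - w))"] by (simp only: norm_mult norm_divide)
  also have "cmod (1 - w ^ m) \<le> 2"
    using norm_triangle_ineq4[of 1 "w ^ m"] assms(1) by (simp add: norm_power)
  then have "cmod z * (cmod (1 - w ^ m) / cmod (1 - w)) \<le> cmod z * (2 / cmod (1 - w))"
    by (intro mult_left_mono divide_right_mono) auto
  finally show ?thesis
    by (simp add: mult.commute)
qed

lemma not_eventually_Re_rotations_ge:
  assumes w: "cmod w = 1" "Im w \<noteq> 0" and "z \<noteq> 0"
  shows "\<not> eventually (\<lambda>j. Re (z * w ^ j) \<ge> - (cmod z * \<bar>Im w\<bar>) / 8) sequentially"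
proof
  define c where "c j = Re (z * w ^ j)" for j
  define d where "d = cmod z * \<bar>Im w\<bar>"
  assume "eventually (\<lambda>j. Re (z * w ^ j) \<ge> - (cmod z * \<bar>Im w\<bar>) / 8) sequentially"
  then obtain J where J: "\<And>j. j \<ge> J \<Longrightarrow> c j \<ge> - d / 8"
    by (auto simp: eventually_sequentially c_def d_def)
  text \<open>Two consecutive terms cannot both be small, so the partial sums grow linearly,
    whereas partial sums of a geometric series with ratio \<open>w \<noteq> 1\<close> stay bounded.\<close>
  have pair: "c j + c (Suc j) \<ge> d / 2" if "j \<ge> J" for j
  proof -
    have "d \<le> \<bar>c j\<bar> + \<bar>c (Suc j)\<bar>"
      using Re_consecutive_rotations_lower_bound[OF w(1), of "z * w ^ j"] w(1)
      unfolding c_def d_def power_Suc2 mult.assoc norm_mult norm_power by simp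
    then show ?thesis
      using J[of j] J[of "Suc j"] that by linarith
  qed
  have lower: "real n * (d / 2) \<le> (\<Sum>i<2 * n. c (J + i))" for n
  proof (induction n)
    case (Suc n)
    have "(\<Sum>i<2 * Suc n. c (J + i)) = (\<Sum>i<2 * n. c (J + i)) + (c (J + 2 * n) + c (Suc (J + 2 * n)))"
      by (simp add: algebra_simps)
    then show ?case
      using Suc.IH pair[of "J + 2 * n"] by (simp add: algebra_simps)
  qed simp
  have upper: "(\<Sum>i<m. c (J + i)) \<le> 2 * cmod z / cmod (1 - w)" for m
  proof -
    have "(\<Sum>i<m. c (J + i)) = (\<Sum>i<m. Re ((z * w ^ J) * w ^ i))"
      by (simp add: c_def power_add mult.assoc)
    also have "\<dots> \<le> 2 * cmod (z * w ^ J) / cmod (1 - w)"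
      using w by (intro sum_Re_rotations_bounded) auto
    finally show ?thesis
      using w(1) by (simp add: norm_mult norm_power)
  qed
  have "d / 2 > 0"
    using assms by (simp add: d_def)
  from reals_Archimedean3[OF this]
  obtain n :: nat where "2 * cmod z / cmod (1 - w) < real n * (d / 2)"
    by blast
  then show False
    using lower[of n] upper[of "2 * n"] by linarith
qed

lemma frequently_Re_rotations_below:
  fixes A r :: real
  assumes "cmod w = 1" "Im w \<noteq> 0" "z \<noteq> 0" "0 \<le> r" "r < 1"
  shows "\<exists>\<^sub>F j in sequentially. Re (z * w ^ j) < - A * r ^ j"
proof (rule ccontr)
  define d where "d = cmod z * \<bar>Im w\<bar>"
  assume "\<not> ?thesis"
  then have "eventually (\<lambda>j. Re (z * w ^ j) \<ge> - A * r ^ j) sequentially"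
    by (simp add: not_frequently not_less)
  moreover have "eventually (\<lambda>j. \<bar>A\<bar> * r ^ j < d / 8) sequentially"
  proof -
    have "(\<lambda>j. \<bar>A\<bar> * r ^ j) \<longlonglongrightarrow> \<bar>A\<bar> * 0"
      using assms by (intro tendsto_mult tendsto_const LIMSEQ_power_zero) auto
    then show ?thesis
      using assms by (intro order_tendstoD(2)) (auto simp: d_def)
  qed
  ultimately have "eventually (\<lambda>j. Re (z * w ^ j) \<ge> - d / 8) sequentially"
  proof eventually_elim
    case (elim j)
    have "A * r ^ j \<le> \<bar>A\<bar> * r ^ j"
      using assms by (intro mult_right_mono) auto
    with elim show ?case
      by linarith
  qed
  with not_eventually_Re_rotations_ge[OF assms(1-3)] show False
    by (simp add: d_def)
qed

lemma eventually_poly_nonzero_at: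
  fixes E :: "real poly"
  assumes "E \<noteq> 0"
  shows "eventually (\<lambda>z. poly E z \<noteq> 0) (at x)"
  using islimpt_finite[OF poly_roots_finite[OF assms], of x]
  by (simp add: islimpt_iff_eventually)

lemma poly_bigo_power_imp_zero:
  fixes E :: "real poly"
  assumes "degree E < n" and "(\<lambda>z. poly E z) \<in> O[at 0](\<lambda>z. z ^ n)"
  shows "E = 0"
proof (rule ccontr)
  assume "E \<noteq> 0"
  define m where "m = order 0 E"
  obtain E1 where E1: "E = [:0, 1:] ^ m * E1" "\<not> [:0, 1:] dvd E1"
    using order_decomp[OF \<open>E \<noteq> 0\<close>, of 0] unfolding m_def by auto
  have E1_0: "poly E1 0 \<noteq> 0"
    using E1(2) poly_eq_0_iff_dvd[of E1 0] by simp
  have mn: "m < n"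
    using order_degree[OF \<open>E \<noteq> 0\<close>, of 0] assms(1) unfolding m_def by linarith
  from assms(2) obtain c where "eventually (\<lambda>z. \<bar>poly E z\<bar> \<le> c * \<bar>z ^ n\<bar>) (at 0)"
    by (elim landau_o.bigE) simp
  then have "eventually (\<lambda>z. \<bar>poly E1 z\<bar> \<le> c * \<bar>z\<bar> ^ (n - m)) (at (0::real))"
    using eventually_neq_at_within[of 0 0 UNIV]
  proof eventually_elim
    case (elim z)
    have "\<bar>z\<bar> ^ m * \<bar>poly E1 z\<bar> \<le> \<bar>z\<bar> ^ m * (c * \<bar>z\<bar> ^ (n - m))"
      using elim(1) mn by (simp add: E1(1) abs_mult power_abs algebra_simps flip: power_add)
    then show ?case
      using elim(2) by simp
  qed
  moreover have "((\<lambda>z. c * \<bar>z\<bar> ^ (n - m)) \<longlongrightarrow> 0) (at (0::real))"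
    using mn by (intro tendsto_eq_intros) auto
  ultimately have "\<bar>poly E1 0\<bar> \<le> 0"
    by (intro tendsto_le[of "at 0" _ 0 "\<lambda>z. \<bar>poly E1 z\<bar>"]) (auto intro!: tendsto_intros)
  with E1_0 show False
    by simp
qed

lemma coprime_rnum_rden:
  assumes "Q \<noteq> 0"
  shows "coprime (rnum P Q) (rden P Q)"
  unfolding rnum_def rden_def using assms by (intro div_gcd_coprime) simp

lemma rnum_rden_coprime:
  assumes "coprime P Q"
  shows "rnum P Q = P" "rden P Q = Q"
  using assms by (simp_all add: rnum_def rden_def)

lemma ratfun_eq_if_cross_eq:
  assumes "Q \<noteq> 0" "Q0 \<noteq> 0" "coprime P0 Q0" and cross: "rnum P Q * Q0 = rden P Q * P0"
  shows "ratfun P Q = ratfun P0 Q0 \<and> is_pole P Q = is_pole P0 Q0"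
proof -
  define P' Q' where "P' = rnum P Q" and "Q' = rden P Q"
  have "Q' \<noteq> 0"
    using assms(1) unfolding Q'_def rden_def by (simp add: dvd_div_eq_0_iff)
  have "Q0 dvd Q'"
  proof -
    have "Q0 dvd Q' * P0"
      using cross unfolding P'_def Q'_def by (metis dvd_triv_right)
    then show ?thesis
      using assms(3) by (simp add: coprime_commute coprime_dvd_mult_left_iff)
  qed
  then obtain c where c: "Q' = Q0 * c"
    by (elim dvdE)
  have "Q' dvd Q0"
  proof -
    have "Q' dvd P' * Q0"
      using cross unfolding P'_def Q'_def by (metis dvd_triv_left)
    then show ?thesis
      using coprime_rnum_rden[OF assms(1), of P] unfolding P'_def Q'_def
      by (simp add: coprime_commute coprime_dvd_mult_right_iff)
  qed
  then have "degree c = 0"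
    using c \<open>Q' \<noteq> 0\<close> assms(2) dvd_imp_degree_le[of Q' Q0] by (simp add: degree_mult_eq)
  then obtain c0 where c0: "c = [:c0:]"
    by (elim degree_eq_zeroE)
  have "c0 \<noteq> 0"
    using c c0 \<open>Q' \<noteq> 0\<close> by auto
  have "P' = P0 * c"
    using cross c assms(2) unfolding P'_def Q'_def by (simp add: ac_simps)
  then show ?thesis
    using c c0 \<open>c0 \<noteq> 0\<close> assms(3) unfolding P'_def Q'_def
    by (auto simp: ratfun_def is_pole_def rnum_rden_coprime fun_eq_iff)
qed

lemma degree_rnum_le:
  assumes "Q \<noteq> 0"
  shows "degree (rnum P Q) \<le> degree P"
proof -
  have "rnum P Q * gcd P Q = P"
    unfolding rnum_def by (rule dvd_div_mult_self) simp
  then show ?thesis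
    using degree_mult_right_le[of "gcd P Q" "rnum P Q"] assms by simp
qed

lemma degree_rden_le:
  assumes "Q \<noteq> 0"
  shows "degree (rden P Q) \<le> degree Q"
proof -
  have "rden P Q * gcd P Q = Q"
    unfolding rden_def by (rule dvd_div_mult_self) simp
  then show ?thesis
    using degree_mult_right_le[of "gcd P Q" "rden P Q"] assms by simp
qed

lemma Pi_class_cross_eq:
  assumes PQ: "(P, Q) \<in> Pi_class m n k" and PQ0: "(P0, Q0) \<in> Pi_class m n k"
    and "m + n \<le> k" "coprime P0 Q0"
  shows "rnum P Q * Q0 = rden P Q * P0"
proof -
  define P' Q' where "P' = rnum P Q" and "Q' = rden P Q"
  have "Q \<noteq> 0" "Q0 \<noteq> 0"
    using PQ PQ0 by (auto simp: Pi_class_def)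
  have "Q' \<noteq> 0"
    using \<open>Q \<noteq> 0\<close> unfolding Q'_def rden_def by (simp add: dvd_div_eq_0_iff)
  have "degree P' \<le> m" "degree Q' \<le> n" "degree P0 \<le> m" "degree Q0 \<le> n"
    using PQ PQ0 degree_rnum_le[OF \<open>Q \<noteq> 0\<close>, of P] degree_rden_le[OF \<open>Q \<noteq> 0\<close>, of P]
    unfolding P'_def Q'_def Pi_class_def by auto
  then have deg: "degree (P' * Q0 - Q' * P0) < k + 1"
    using degree_diff_le[of "P' * Q0" "m + n" "Q' * P0"] degree_mult_le[of P' Q0]
      degree_mult_le[of Q' P0] \<open>m + n \<le> k\<close> by linarith
  have "(\<lambda>z. ratfun P Q z - exp z) \<in> O[at 0](\<lambda>z. z ^ (k + 1))"
    "(\<lambda>z. ratfun P0 Q0 z - exp z) \<in> O[at 0](\<lambda>z. z ^ (k + 1))"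
    using PQ PQ0 by (simp_all add: Pi_class_def)
  from sum_in_bigo(2)[OF this]
  have "(\<lambda>z. ratfun P Q z - ratfun P0 Q0 z) \<in> O[at 0](\<lambda>z. z ^ (k + 1))"
    by simp
  moreover have "(\<lambda>z. poly (Q' * Q0) z) \<in> O[at 0](\<lambda>_. 1)"
    by (rule bigoI_tendsto[where c = "poly (Q' * Q0) 0"]) (auto intro!: tendsto_intros)
  ultimately have prod: "(\<lambda>z. poly (Q' * Q0) z * (ratfun P Q z - ratfun P0 Q0 z))
      \<in> O[at 0](\<lambda>z. 1 * z ^ (k + 1))"
    using landau_o.big.mult by fastforce
  text \<open>The polynomial \<open>P' Q0 - Q' P0\<close> has degree at most \<open>m + n\<close> but vanishes to order
    \<open>k + 1\<close> at 0, being the difference of the two approximants times a bounded factor.\<close>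
  have "eventually (\<lambda>z. poly (Q' * Q0) z * (ratfun P Q z - ratfun P0 Q0 z)
      = poly (P' * Q0 - Q' * P0) z) (at 0)"
    using eventually_poly_nonzero_at[OF \<open>Q' \<noteq> 0\<close>] eventually_poly_nonzero_at[OF \<open>Q0 \<noteq> 0\<close>]
    by eventually_elim
      (simp add: ratfun_def rnum_rden_coprime[OF assms(4)] P'_def Q'_def field_simps)
  from landau_o.big.in_cong[OF this] prod
  have "(\<lambda>z. poly (P' * Q0 - Q' * P0) z) \<in> O[at 0](\<lambda>z. z ^ (k + 1))"
    by simp
  then show ?thesis
    using poly_bigo_power_imp_zero[OF deg] unfolding P'_def Q'_def by simp
qed

lemma Pi_class_unique:
  assumes "(P, Q) \<in> Pi_class m n k" "(P0, Q0) \<in> Pi_class m n k" "m + n \<le> k" "coprime P0 Q0"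
  shows "ratfun P Q = ratfun P0 Q0 \<and> is_pole P Q = is_pole P0 Q0"
proof -
  have "Q \<noteq> 0" "Q0 \<noteq> 0"
    using assms(1,2) by (auto simp: Pi_class_def)
  then show ?thesis
    using ratfun_eq_if_cross_eq[OF _ _ assms(4) Pi_class_cross_eq[OF assms]] by simp
qed

lemma R_opt_eq_radius_am:
  assumes "(P0, Q0) \<in> Pi_class m n k" "m + n \<le> k" "coprime P0 Q0"
  shows "R_opt m n k = radius_am P0 Q0"
proof -
  have same: "radius_am P Q = radius_am P0 Q0" if "(P, Q) \<in> Pi_class m n k" for P Q
  proof -
    have "ratfun P Q = ratfun P0 Q0" "is_pole P Q = is_pole P0 Q0"
      using Pi_class_unique[OF that assms] by auto
    then show ?thesis
      unfolding radius_am_def abs_monotonic_at_def by simp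
  qed
  have "(\<lambda>(P, Q). radius_am P Q) ` Pi_class m n k = {radius_am P0 Q0}"
  proof (intro equalityI subsetI)
    fix y
    assume "y \<in> (\<lambda>(P, Q). radius_am P Q) ` Pi_class m n k"
    then show "y \<in> {radius_am P0 Q0}"
      using same by auto
  next
    fix y
    assume "y \<in> {radius_am P0 Q0}"
    then show "y \<in> (\<lambda>(P, Q). radius_am P Q) ` Pi_class m n k"
      using assms(1) by (simp add: rev_image_eqI)
  qed
  then show ?thesis
    by (simp add: R_opt_def)
qed

lemma radius_am_eqI:
  assumes "0 \<le> r" "\<And>x. -r \<le> x \<Longrightarrow> x \<le> 0 \<Longrightarrow> abs_monotonic_at P Q x"
    "\<And>x. x < -r \<Longrightarrow> \<not> abs_monotonic_at P Q x"
  shows "radius_am P Q = ereal r"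
proof -
  define S where "S = {s. 0 \<le> s \<and> (\<forall>x\<in>{-s..0}. abs_monotonic_at P Q x)}"
  have "r \<in> S"
    using assms(1,2) by (simp add: S_def)
  moreover have "s \<le> r" if "s \<in> S" for s
  proof (rule ccontr)
    assume "\<not> s \<le> r"
    then show False
      using that assms(3)[of "-s"] by (simp add: S_def)
  qed
  ultimately have "Sup (ereal ` (S \<union> {0})) = ereal r"
    using assms(1) by (intro Sup_eqI) auto
  then show ?thesis
    by (simp add: radius_am_def S_def)
qed

lemma poly_psi36_num: "poly psi36_num x = 1 + x / 2 + x^2 / 10 + x^3 / 120"
  by (simp add: psi36_num_def algebra_simps power2_eq_square power3_eq_cube)

lemma poly_psi36_den: "poly psi36_den x = 1 - x / 2 + x^2 / 10 - x^3 / 120"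
  by (simp add: psi36_den_def algebra_simps power2_eq_square power3_eq_cube)

lemma coprime_psi36: "coprime psi36_num psi36_den"
proof -
  have bezout: "[:1/2, -3/25, 1/100:] * psi36_num + [:1/2, 3/25, 1/100:] * psi36_den = 1"
    by (simp add: psi36_num_def psi36_den_def)
  show ?thesis
    by (rule coprimeI) (metis bezout dvd_add dvd_mult)
qed

lemma ratfun_psi36: "ratfun psi36_num psi36_den x = poly psi36_num x / poly psi36_den x"
  by (simp add: ratfun_def rnum_rden_coprime[OF coprime_psi36])

lemma is_pole_psi36: "is_pole psi36_num psi36_den x \<longleftrightarrow> poly psi36_den x = 0"
  by (simp add: is_pole_def rnum_rden_coprime[OF coprime_psi36])

lemma psi36_in_Pi_class: "(psi36_num, psi36_den) \<in> Pi_class 3 3 6"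
proof -
  have "(\<lambda>z. ratfun psi36_num psi36_den z - exp z) \<in> O[at 0](\<lambda>z. z ^ (6 + 1))"
    unfolding ratfun_psi36 poly_psi36_num poly_psi36_den by real_asymp
  then show ?thesis
    by (simp add: Pi_class_def psi36_num_def psi36_den_def)
qed

text \<open>\<open>p\<close> is the real root of the denominator; the crude bounds on it suffice for
  \<open>residue_numerator_bound\<close> and \<open>rho < p\<close>.\<close>

locale psi36_real_pole =
  fixes p :: real
  assumes den_p: "poly psi36_den p = 0" and p_gt: "9/2 < p" and p_lt: "p < 49/10"
begin

definition q :: complex
  where "q = Complex ((12 - p) / 2) (sqrt (3 * p^2 - 24 * p + 96) / 2)"

definition A :: real
  where "A = 120 * (2 + p^2 / 5) / (3 * p^2 - 24 * p + 60)"

definition B :: complex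
  where "B = 120 * (2 + q^2 / 5) / ((of_real p - q) * (cnj q - q))"

definition rho :: real
  where "rho = 4 * (5 - p) / (p - 4)"

lemma p_cubic: "p^3 - 12 * p^2 + 60 * p - 120 = 0"
  using den_p by (simp add: poly_psi36_den field_simps)

lemma Im_q_pos: "Im q > 0"
  and Im_q_sq: "(Im q)^2 = (3 * p^2 - 24 * p + 96) / 4"
proof -
  have "3 * p^2 - 24 * p + 96 = 3 * (p - 4)^2 + 48"
    by (simp add: power2_eq_square algebra_simps)
  then have "3 * p^2 - 24 * p + 96 > 0"
    by (smt (verit) zero_le_power2)
  then show "Im q > 0" "(Im q)^2 = (3 * p^2 - 24 * p + 96) / 4"
    by (simp_all add: q_def power_divide)
qed

lemma q_not_real: "q \<notin> \<real>"
  using Im_q_pos by (auto simp: complex_is_Real_iff)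

lemma rho_eq: "(3 * p - 12) * rho = 60 - 12 * p"
  using p_gt by (simp add: rho_def field_simps)

lemma cmod_q_minus_sq: "(cmod (q - of_real x))^2 = (p - x)^2 + (3 * p - 12) * (x + rho)"
proof -
  have "(cmod (q - of_real x))^2 = ((12 - p) / 2 - x)^2 + (Im q)^2"
    by (simp add: cmod_power2 q_def)
  also have "\<dots> = (p - x)^2 + (3 * p - 12) * x + (60 - 12 * p)"
    unfolding Im_q_sq by (simp add: field_simps power2_eq_square)
  finally show ?thesis
    unfolding distrib_left rho_eq by simp
qed

lemma cmod_q_minus_p_sq: "(cmod (q - of_real p))^2 = 3 * p^2 - 24 * p + 60"
  using cmod_q_minus_sq[of p] rho_eq by (simp add: algebra_simps power2_eq_square)

lemma cmod_q_minus_p_sq_pos: "3 * p^2 - 24 * p + 60 > 0"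
proof -
  have "q - of_real p \<noteq> 0"
    using q_not_real by auto
  then show ?thesis
    unfolding cmod_q_minus_p_sq[symmetric] by simp
qed

lemma q_quadratic:
  "(q - z) * (cnj q - z) = z^2 - of_real (12 - p) * z + of_real (p^2 - 12 * p + 60)"
proof -
  have sum: "q + cnj q = of_real (12 - p)" and prod: "q * cnj q = of_real (p^2 - 12 * p + 60)"
    using Im_q_sq by (simp_all add: q_def complex_eq_iff power2_eq_square field_simps)
  have "(q - z) * (cnj q - z) = z^2 - (q + cnj q) * z + q * cnj q"
    by (simp add: algebra_simps power2_eq_square)
  then show ?thesis
    unfolding sum prod .
qed

lemma den_factor_complex:
  "1 - z / 2 + z^2 / 10 - z^3 / 120 = (of_real p - z) * (q - z) * (cnj q - z) / 120"
proof -
  have "of_real (p * (p^2 - 12 * p + 60)) = (120 :: complex)"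
    using p_cubic by (simp add: algebra_simps power2_eq_square power3_eq_cube)
  then show ?thesis
    unfolding mult.assoc q_quadratic by (simp add: algebra_simps power2_eq_square power3_eq_cube)
qed

lemma den_factor: "poly psi36_den x = (p - x) * (cmod (q - of_real x))^2 / 120"
proof -
  have "(q - of_real x) * (cnj q - of_real x) = of_real ((cmod (q - of_real x))^2)"
    by (simp only: complex_norm_square complex_cnj_diff complex_cnj_complex_of_real)
  then have "complex_of_real (poly psi36_den x) = of_real ((p - x) * (cmod (q - of_real x))^2 / 120)"
    using den_factor_complex[of "of_real x"] by (simp add: poly_psi36_den mult.assoc)
  then show ?thesis
    by (simp only: of_real_eq_iff)
qed

lemma psi36_partial_fractions:
  assumes "x \<noteq> p"
  shows "ratfun psi36_num psi36_den x = -1 + A / (p - x) + Re (2 * B / (q - of_real x))"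
proof -
  define z where "z = complex_of_real x"
  define r where "r w = 2 + 0 * w + 1/5 * w^2" for w :: complex
  have ne: "of_real p \<noteq> q" "of_real p \<noteq> cnj q" "q \<noteq> cnj q" "z \<noteq> of_real p" "z \<noteq> q" "z \<noteq> cnj q"
    using q_not_real assms Im_q_pos by (auto simp: z_def complex_eq_iff)
  have F: "(of_real p - z) * (q - z) * (cnj q - z) \<noteq> 0"
    using ne by auto
  have "complex_of_real (ratfun psi36_num psi36_den x)
      = (1 + z / 2 + z^2 / 10 + z^3 / 120) / (1 - z / 2 + z^2 / 10 - z^3 / 120)"
    by (simp add: ratfun_psi36 poly_psi36_num poly_psi36_den z_def)
  also have "\<dots> = -1 + r z / (1 - z / 2 + z^2 / 10 - z^3 / 120)"
  proof -
    define D where "D = 1 - z / 2 + z^2 / 10 - z^3 / 120"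
    have num: "1 + z / 2 + z^2 / 10 + z^3 / 120 = r z - D"
      by (simp add: r_def D_def algebra_simps)
    have "D \<noteq> 0"
      unfolding D_def den_factor_complex using F by simp
    then show ?thesis
      unfolding D_def[symmetric] num by (simp add: diff_divide_distrib)
  qed
  also have "\<dots> = -1 + 120 * (r z / ((of_real p - z) * (q - z) * (cnj q - z)))"
    unfolding den_factor_complex by simp
  also have "\<dots> = -1 + 120 * (r (of_real p) / ((q - of_real p) * (cnj q - of_real p) * (of_real p - z)))
      + 120 * (r q / ((of_real p - q) * (cnj q - q) * (q - z)))
      + 120 * (r (cnj q) / ((of_real p - cnj q) * (q - cnj q) * (cnj q - z)))"
    unfolding r_def partial_fractions_three_poles[OF ne] by (simp only: distrib_left add.assoc)
  also have "120 * (r (of_real p) / ((q - of_real p) * (cnj q - of_real p) * (of_real p - z)))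
      = of_real (A / (p - x))"
  proof -
    have "(q - of_real p) * (cnj q - of_real p) = of_real (3 * p^2 - 24 * p + 60)"
      unfolding q_quadratic by (simp add: algebra_simps power2_eq_square)
    then show ?thesis
      by (simp add: r_def A_def z_def)
  qed
  also have "120 * (r q / ((of_real p - q) * (cnj q - q) * (q - z))) = B / (q - z)"
    unfolding r_def B_def by simp
  also have "120 * (r (cnj q) / ((of_real p - cnj q) * (q - cnj q) * (cnj q - z))) = cnj (B / (q - z))"
    unfolding r_def B_def z_def by simp
  finally have "complex_of_real (ratfun psi36_num psi36_den x)
      = of_real (-1 + A / (p - x)) + (B / (q - z) + cnj (B / (q - z)))"
    by simp
  then show ?thesis
    unfolding complex_add_cnj z_def by (simp only: of_real_add[symmetric] of_real_eq_iff)
      (simp add: Re_divide field_simps)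
qed

lemma higher_deriv_psi36:
  assumes "x \<noteq> p"
  shows "(deriv ^^ k) (ratfun psi36_num psi36_den) x = (if k = 0 then -1 else 0)
           + fact k * (A / (p - x) ^ Suc k + Re (2 * B / (q - of_real x) ^ Suc k))"
proof -
  have "eventually (\<lambda>t. t \<noteq> p) (nhds x)"
    using assms by (intro t1_space_nhds)
  then have "eventually (\<lambda>t. ratfun psi36_num psi36_den t
      = -1 + A / (p - t) + Re (2 * B / (q - of_real t))) (nhds x)"
    by eventually_elim (rule psi36_partial_fractions)
  then have "(deriv ^^ k) (ratfun psi36_num psi36_den) x
      = (deriv ^^ k) (\<lambda>t. -1 + A / (p - t) + Re (2 * B / (q - of_real t))) x"
    by (rule higher_deriv_cong_ev) simp
  also have "\<dots> = (if k = 0 then -1 else 0)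
      + fact k * (A / (p - x) ^ Suc k + Re (2 * B / (q - of_real x) ^ Suc k))"
    by (rule higher_deriv_simple_fractions[OF q_not_real assms])
  finally show ?thesis .
qed

lemma residue_numerator_bound:
  "(cmod (2 + q^2 / 5))^2 * (3 * p^2 - 24 * p + 60) < (2 + p^2 / 5)^2 * (Im q)^2"
proof -
  define R where "R = 2 + q^2 / 5"
  have cmod_R: "(cmod R)^2 = (22/5 - p^2/10)^2 + (12 - p)^2 * (Im q)^2 / 25"
    unfolding cmod_power2 R_def using Im_q_sq by (simp add: q_def power2_eq_square field_simps)
  text \<open>The difference is a polynomial in \<open>p\<close>; reducing it modulo the cubic satisfied by \<open>p\<close>
    leaves the remainder \<open>576 - 117/5 p\<^sup>2\<close>.\<close>
  have "(2 + p^2 / 5)^2 * (Im q)^2 - (cmod R)^2 * (3 * p^2 - 24 * p + 60)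
      = (414/5 - 468/25 * p + 63/25 * p^2 - 9/100 * p^3) * (p^3 - 12 * p^2 + 60 * p - 120)
        + (576 - 117/5 * p^2)"
    unfolding cmod_R Im_q_sq by (simp add: field_simps power2_eq_square power3_eq_cube)
  moreover have "p^2 < (49/10)^2"
    using p_gt p_lt by (intro power_strict_mono) auto
  ultimately show ?thesis
    using p_cubic unfolding R_def[symmetric] by (simp add: power2_eq_square)
qed

lemma two_cmod_B_le_A: "2 * cmod B \<le> A"
proof -
  define Qp R where "Qp = 3 * p^2 - 24 * p + 60" and "R = 2 + q^2 / 5"
  have "cmod (cnj q - q) = 2 * Im q"
    using Im_q_pos by (simp add: cmod_def real_sqrt_mult)
  then have "cmod B = 120 * cmod R / (cmod (q - of_real p) * (2 * Im q))"
    unfolding B_def R_def[symmetric] by (simp add: norm_mult norm_divide norm_minus_commute)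
  then have "(2 * cmod B)^2 = 120^2 * (cmod R)^2 / (Qp * (Im q)^2)"
    using Im_q_pos by (simp add: power_mult_distrib power_divide cmod_q_minus_p_sq Qp_def)
  also have "\<dots> \<le> 120^2 * (2 + p^2 / 5)^2 / Qp^2"
    using residue_numerator_bound Im_q_pos cmod_q_minus_p_sq_pos unfolding Qp_def R_def
    by (simp add: divide_simps power2_eq_square)
  also have "\<dots> = A^2"
    by (simp only: A_def Qp_def[symmetric] power_divide power_mult_distrib)
  finally show ?thesis
    by (rule power2_le_imp_le) (use cmod_q_minus_p_sq_pos in \<open>simp add: A_def\<close>)
qed

lemma A_pos: "A > 0"
  unfolding A_def using cmod_q_minus_p_sq_pos
  by (intro divide_pos_pos mult_pos_pos) (auto intro: add_pos_nonneg)

lemma B_nonzero: "B \<noteq> 0"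
proof -
  have "Im (2 + q^2 / 5) = (12 - p) * Im q / 5"
    by (simp add: q_def power2_eq_square)
  moreover have "(12 - p) * Im q / 5 > 0"
    using Im_q_pos p_lt by simp
  ultimately have "Im (2 + q^2 / 5) \<noteq> 0"
    by linarith
  then have "2 + q^2 / 5 \<noteq> 0"
    by (metis zero_complex.sel(2))
  moreover have "of_real p - q \<noteq> 0" "cnj q - q \<noteq> 0"
    using Im_q_pos by (auto simp: complex_eq_iff)
  ultimately show ?thesis
    unfolding B_def by (metis divide_eq_0_iff mult_eq_0_iff zero_neq_numeral)
qed

lemma rho_bounds: "0 < rho" "rho < p"
proof -
  have "(9/2)^2 < p^2"
    using p_gt by (intro power_strict_mono) auto
  then have "20 < p * p"
    by (simp add: power2_eq_square)
  then show "0 < rho" "rho < p"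
    using p_gt p_lt by (simp_all add: rho_def field_simps)
qed

lemma psi36_den_pos:
  assumes "x < p"
  shows "poly psi36_den x > 0"
proof -
  have "q - of_real x \<noteq> 0"
    using q_not_real by auto
  then show ?thesis
    unfolding den_factor using assms by (intro divide_pos_pos mult_pos_pos) auto
qed

lemma simple_fractions_nonneg:
  assumes "-rho \<le> x" "x < p"
  shows "A / (p - x) ^ n + Re (2 * B / (q - of_real x) ^ n) \<ge> 0"
proof -
  have "0 \<le> (3 * p - 12) * (x + rho)"
    using assms(1) p_gt by simp
  then have "(p - x)^2 \<le> (cmod (q - of_real x))^2"
    unfolding cmod_q_minus_sq by simp
  then have "p - x \<le> cmod (q - of_real x)"
    by (rule power2_le_imp_le) simp
  then have "(p - x) ^ n \<le> cmod (q - of_real x) ^ n"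
    using assms(2) by (intro power_mono) auto
  then have "2 * cmod B / cmod (q - of_real x) ^ n \<le> A / (p - x) ^ n"
    using two_cmod_B_le_A A_pos assms(2) by (intro frac_le) auto
  moreover have "- (2 * cmod B / cmod (q - of_real x) ^ n) \<le> Re (2 * B / (q - of_real x) ^ n)"
    using abs_Re_le_cmod[of "2 * B / (q - of_real x) ^ n"]
    by (simp add: norm_mult norm_divide norm_power)
  ultimately show ?thesis
    by linarith
qed

lemma simple_fractions_eventually_negative:
  assumes "x < -rho"
  shows "\<exists>n\<ge>2. A / (p - x) ^ n + Re (2 * B / (q - of_real x) ^ n) < 0"
proof -
  define W where "W = q - of_real x"
  define r where "r = cmod W"
  have "W \<noteq> 0"
    using q_not_real by (auto simp: W_def)
  then have "r > 0"
    by (simp add: r_def)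
  have "p - x > 0"
    using assms rho_bounds by simp
  have "(3 * p - 12) * (x + rho) < 0"
    using assms p_gt by (intro mult_pos_neg) auto
  then have "r^2 < (p - x)^2"
    unfolding r_def W_def cmod_q_minus_sq by simp
  then have "r < p - x"
    using \<open>p - x > 0\<close> by (rule power2_less_imp_less[OF _ less_imp_le])
  define w where "w = of_real r / W"
  have "cmod w = 1"
    using \<open>W \<noteq> 0\<close> by (simp add: w_def r_def norm_divide)
  moreover have "Im w \<noteq> 0"
    using \<open>W \<noteq> 0\<close> \<open>r > 0\<close> Im_q_pos by (simp add: w_def W_def Im_divide)
  moreover have "0 \<le> r / (p - x)" "r / (p - x) < 1"
    using \<open>r > 0\<close> \<open>r < p - x\<close> by auto
  ultimately have "\<exists>\<^sub>F n in sequentially. Re (2 * B * w ^ n) < - A * (r / (p - x)) ^ n"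
    using B_nonzero by (intro frequently_Re_rotations_below) auto
  then obtain n where "n \<ge> 2" and n: "Re (2 * B * w ^ n) < - A * (r / (p - x)) ^ n"
    unfolding frequently_sequentially by blast
  have "Re (2 * B / W ^ n) = Re (2 * B * w ^ n) / r ^ n"
  proof -
    have "2 * B / W ^ n = 2 * B * w ^ n / of_real (r ^ n)"
      using \<open>W \<noteq> 0\<close> \<open>r > 0\<close> by (simp add: w_def power_divide)
    then show ?thesis
      by (simp only: Re_divide_of_real)
  qed
  also have "\<dots> < - A * (r / (p - x)) ^ n / r ^ n"
    using n \<open>r > 0\<close> by (intro divide_strict_right_mono) auto
  also have "\<dots> = - (A / (p - x) ^ n)"
    using \<open>r > 0\<close> by (simp add: power_divide)
  finally show ?thesis
    using \<open>n \<ge> 2\<close> unfolding W_def by force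
qed

lemma abs_monotonic_at_psi36:
  assumes "-rho \<le> x" "x \<le> 0"
  shows "abs_monotonic_at psi36_num psi36_den x"
proof -
  have "x < p" "-x < p"
    using assms rho_bounds by linarith+
  have "(deriv ^^ k) (ratfun psi36_num psi36_den) x \<ge> 0" for k
  proof (cases k)
    case 0
    have "poly psi36_num x = poly psi36_den (-x)"
      by (simp add: poly_psi36_num poly_psi36_den)
    then show ?thesis
      using 0 psi36_den_pos[OF \<open>x < p\<close>] psi36_den_pos[OF \<open>-x < p\<close>] by (simp add: ratfun_psi36)
  next
    case (Suc m)
    then have "(deriv ^^ k) (ratfun psi36_num psi36_den) x
        = fact k * (A / (p - x) ^ Suc k + Re (2 * B / (q - of_real x) ^ Suc k))"
      unfolding higher_deriv_psi36[OF less_imp_neq[OF \<open>x < p\<close>]] by simp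
    then show ?thesis
      using simple_fractions_nonneg[OF assms(1) \<open>x < p\<close>, of "Suc k"] by simp
  qed
  moreover have "\<not> is_pole psi36_num psi36_den x"
    using psi36_den_pos[OF \<open>x < p\<close>] by (simp add: is_pole_psi36)
  ultimately show ?thesis
    by (simp add: abs_monotonic_at_def)
qed

lemma not_abs_monotonic_at_psi36:
  assumes "x < -rho"
  shows "\<not> abs_monotonic_at psi36_num psi36_den x"
proof -
  have "x \<noteq> p"
    using assms rho_bounds by simp
  obtain n where "n \<ge> 2" "A / (p - x) ^ Suc (n - 1) + Re (2 * B / (q - of_real x) ^ Suc (n - 1)) < 0"
    using simple_fractions_eventually_negative[OF assms] by force
  then have "(deriv ^^ (n - 1)) (ratfun psi36_num psi36_den) x < 0"
    unfolding higher_deriv_psi36[OF \<open>x \<noteq> p\<close>] by (simp add: mult_pos_neg)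
  then show ?thesis
    by (auto simp: abs_monotonic_at_def not_le)
qed

lemma radius_am_psi36: "radius_am psi36_num psi36_den = ereal rho"
  using rho_bounds abs_monotonic_at_psi36 not_abs_monotonic_at_psi36
  by (intro radius_am_eqI) auto

lemma rho_cubic: "rho^3 + 6 * rho^2 - 40 = 0"
proof -
  have "p - 4 \<noteq> 0"
    using p_gt by simp
  have "rho * (p - 4) = 4 * (5 - p)"
    using \<open>p - 4 \<noteq> 0\<close> by (simp add: rho_def)
  then have "(p - 4)^3 * (rho^3 + 6 * rho^2 - 40) = -8 * (p^3 - 12 * p^2 + 60 * p - 120)"
    by (simp add: power2_eq_square power3_eq_cube algebra_simps) algebra
  then show ?thesis
    using p_cubic \<open>p - 4 \<noteq> 0\<close> by simp
qed

end

definition cardano_root :: real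
  where "cardano_root = -2 + root 3 4 * (root 3 (3 - sqrt 5) + root 3 (3 + sqrt 5))"

lemma cardano_root_cubic: "cardano_root^3 + 6 * cardano_root^2 - 40 = 0"
proof -
  define a b where "a = root 3 (3 - sqrt 5)" and "b = root 3 (3 + sqrt 5)"
  define y where "y = root 3 4 * (a + b)"
  have "a * b = root 3 4"
    unfolding a_def b_def by (simp add: algebra_simps flip: real_root_mult)
  moreover have "a^3 + b^3 = 6" "(root 3 4)^3 = 4"
    unfolding a_def b_def by (simp_all add: odd_real_root_pow)
  moreover have "y^3 = (root 3 4)^3 * (a^3 + b^3 + 3 * (a * b) * (a + b))"
    unfolding y_def by (simp add: power3_eq_cube algebra_simps)
  ultimately have y3: "y^3 = 24 + 12 * y"
    unfolding y_def by (simp add: algebra_simps)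
  have c: "cardano_root = y - 2"
    by (simp add: cardano_root_def y_def a_def b_def)
  show ?thesis
    unfolding c using y3 by (simp add: power2_eq_square power3_eq_cube algebra_simps)
qed

lemma cubic_factor_form: "(y::real)^3 + 6 * y^2 - 40 = (y + 4)^2 * (y - 2) - 8"
  by (simp add: power2_eq_square power3_eq_cube algebra_simps)

lemma cubic_strict_mono_gt_2:
  fixes u v :: real
  assumes "2 < u" "u < v"
  shows "u^3 + 6 * u^2 - 40 < v^3 + 6 * v^2 - 40"
proof -
  have "(u + 4)^2 * (u - 2) < (v + 4)^2 * (v - 2)"
    using assms by (intro mult_strict_mono power_strict_mono) auto
  then show ?thesis
    unfolding cubic_factor_form by simp
qed

lemma cubic_root_iff: "(x::real)^3 + 6 * x^2 - 40 = 0 \<longleftrightarrow> x = cardano_root"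
proof -
  have gt2: "y > 2" if "y^3 + 6 * y^2 - 40 = 0" for y :: real
  proof (rule ccontr)
    assume "\<not> y > 2"
    then have "(y + 4)^2 * (y - 2) \<le> 0"
      by (intro mult_nonneg_nonpos) auto
    then show False
      using that unfolding cubic_factor_form by simp
  qed
  show ?thesis
    using gt2 cardano_root_cubic cubic_strict_mono_gt_2[of x cardano_root]
      cubic_strict_mono_gt_2[of cardano_root x] by (metis linorder_neqE_linordered_idom less_irrefl)
qed

lemma psi36_den_real_root: "\<exists>p. poly psi36_den p = 0 \<and> 9/2 < p \<and> p < 49/10"
proof -
  have "poly psi36_den (9/2) > 0" "poly psi36_den (49/10) < 0"
    by (simp_all add: poly_psi36_den power2_eq_square power3_eq_cube)
  moreover have "continuous_on {9/2..49/10} (poly psi36_den)"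
    by (intro continuous_intros)
  ultimately obtain p where "9/2 \<le> p" "p \<le> 49/10" "poly psi36_den p = 0"
    using IVT2'[of "poly psi36_den" "49/10" 0 "9/2"] by auto
  moreover from this have "p \<noteq> 9/2" "p \<noteq> 49/10"
    using \<open>poly psi36_den (9/2) > 0\<close> \<open>poly psi36_den (49/10) < 0\<close> by (metis less_irrefl)+
  ultimately show ?thesis
    by auto
qed

theorem mainTheorem14:
  shows "(psi36_num, psi36_den) \<in> Pi_class 3 3 6
    \<and> radius_am psi36_num psi36_den =
        ereal (-2 + root 3 4 * (root 3 (3 - sqrt 5) + root 3 (3 + sqrt 5)))
    \<and> (\<forall>x::real. x ^ 3 + 6 * x ^ 2 - 40 = 0 \<longleftrightarrow>
          x = -2 + root 3 4 * (root 3 (3 - sqrt 5) + root 3 (3 + sqrt 5)))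
    \<and> R_opt 3 3 6 = ereal (-2 + root 3 4 * (root 3 (3 - sqrt 5) + root 3 (3 + sqrt 5)))"
proof -
  obtain p where "psi36_real_pole p"
    using psi36_den_real_root by (auto simp: psi36_real_pole_def)
  then interpret psi36_real_pole p .
  have "radius_am psi36_num psi36_den = ereal cardano_root"
    using radius_am_psi36 rho_cubic cubic_root_iff by simp
  moreover have "R_opt 3 3 6 = radius_am psi36_num psi36_den"
    using R_opt_eq_radius_am[OF psi36_in_Pi_class _ coprime_psi36] by simp
  ultimately show ?thesis
    using psi36_in_Pi_class cubic_root_iff unfolding cardano_root_def by simp
qed

end
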